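(* Let $\mathcal{M}_1=(\Sigma,\Gamma,\mathcal{H}_1,U^{(1)},M^{(1)})$ and $\mathcal{M}_2=(\Sigma,\Gamma,\mathcal{H}_2,U^{(2)},M^{(2)})$ be QMMs with initial density operators $\rho_1,\rho_2$, let $k$ be a positive integer, $n_1=\dim\mathcal{H}_1$, $n_2=\dim\mathcal{H}_2$ and $n=n_1^2+n_2^2$. Then $(\mathcal{M}_1,\rho_1)\sim_k(\mathcal{M}_2,\rho_2)$ if and only if there exist complex $n\times n$ matrices $F^{(0)},\dots,F^{(k)}$, $A^{(0)}_\sigma,\dots,A^{(k)}_\sigma$ for each $\sigma\in\Sigma$, and $A^{(0)}_\gamma,\dots,A^{(k-1)}_\gamma$ for each $\gamma\in\Gamma$, such that: (1) the first column of $F^{(0)}$ is $\begin{bmatrix}\vec\rho_1\\ \vec\rho_2\end{bmatrix}$; (2) $\eta^\dagger F^{(l)}=0$ for $0\le l\le k$, where $\eta=\begin{bmatrix}\eta_{n_1}\\ -\eta_{n_2}\end{bmatrix}$; (3) for every $\sigma\in\Sigma$ and $0\le l\le k$: $\begin{bmatrix}\hat U^{(1)}_\sigma&0\\0&\hat U^{(2)}_\sigma\end{bmatrix}F^{(l)}=F^{(l)}A^{(l)}_\sigma$; (4) for every $\gamma\in\Gamma$ and $0\le l<k$: $\begin{bmatrix}\hat M^{(1)}_\gamma&0\\0&\hat M^{(2)}_\gamma\end{bmatrix}F^{(l)}=F^{(l+1)}A^{(l)}_\gamma$.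
   Context: A quantum Mealy machine (QMM) is a tuple $\mathcal{M}=(\Sigma,\Gamma,\mathcal{H},U,M)$ where $\Sigma,\Gamma$ are finite alphabets, $\mathcal{H}$ a finite-dimensional complex Hilbert space, $U=\{U_\sigma\}_{\sigma\in\Sigma}$ unitary operators on $\mathcal{H}$, $M=\{M_\gamma\}_{\gamma\in\Gamma}$ linear operators with $\sum_\gamma M_\gamma^\dagger M_\gamma=I$. For a word $a$, $|a|$ is its length, $a[l:r]=a[l]\cdots a[r]$ (empty if $l>r$), $U_a=U_{a[|a|]}\cdots U_{a[1]}$, $U_\epsilon=I$. A scheduler for $a\in\Sigma^*$ is a finite non-decreasing integer sequence $\mathcal{S}=(s_1\le\dots\le s_{|\mathcal{S}|})$ in $\{0,\dots,|a|\}$ (possibly empty). With $s_0=0$, $s_{|\mathcal{S}|+1}=|a|$, $a_i=a[s_{i-1}+1:s_i]$. For $b\in\Gamma^{|\mathcal{S}|}$, $V_{b|a,\mathcal{S}}=U_{a_{|\mathcal{S}|+1}}M_{b_{|\mathcal{S}|}}U_{a_{|\mathcal{S}|}}\cdots M_{b_1}U_{a_1}$ and $\Pr^{\mathcal{M}}_\rho(b|a,\mathcal{S})=\operatorname{tr}(V_{b|a,\mathcal{S}}\rho V_{b|a,\mathcal{S}}^\dagger)$. $(\mathcal{M}_1,\rho_1)\sim_k(\mathcal{M}_2,\rho_2)$ means $\Pr^{\mathcal{M}_1}_{\rho_1}(b|a,\mathcal{S})=\Pr^{\mathcal{M}_2}_{\rho_2}(b|a,\mathcal{S})$ for all $a\in\Sigma^*$,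 schedulers $\mathcal{S}$ for $a$ with $|\mathcal{S}|\le k$, and $b\in\Gamma^{|\mathcal{S}|}$. For a $d\times d$ matrix $\rho$, its vectorization $\vec\rho\in\mathbb{C}^{d^2}$ has entries $\vec\rho_{(i-1)d+j}=\rho_{ij}$; for a $d\times d$ matrix $A$, $\hat A$ is the $d^2\times d^2$ matrix with $\hat A_{(i-1)d+j,(x-1)d+y}=A_{ix}\overline{A_{jy}}$ (so $\overrightarrow{A\rho A^\dagger}=\hat A\vec\rho$); $\eta_d\in\mathbb{C}^{d^2}$ is the vectorization of the trace, $(\eta_d)_{(i-1)d+j}=\delta_{ij}$ (so $\operatorname{tr}\rho=\eta_d^\dagger\vec\rho$). *)

theory Defs
  imports Complex_Main "Jordan_Normal_Form.Matrix"
begin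

(* Hilbert space H = C^d; operators are d x d complex matrices (Jordan_Normal_Form). *)

definition adj :: "complex mat \<Rightarrow> complex mat" where
  "adj A = transpose_mat (map_mat cnj A)"

definition mtrace :: "complex mat \<Rightarrow> complex" where
  "mtrace A = (\<Sum>i<dim_row A. A $$ (i, i))"

definition unitary_op :: "nat \<Rightarrow> complex mat \<Rightarrow> bool" where
  "unitary_op d U \<longleftrightarrow> U \<in> carrier_mat d d \<and> adj U * U = 1\<^sub>m d \<and> U * adj U = 1\<^sub>m d"

definition density_op :: "nat \<Rightarrow> complex mat \<Rightarrow> bool" where
  "density_op d \<rho> \<longleftrightarrow> \<rho> \<in> carrier_mat d d \<and> adj \<rho> = \<rho> \<and>
     (\<forall>v \<in> carrier_vec d. Im (conjugate v \<bullet> (\<rho> *\<^sub>v v)) = 0 \<and> Re (conjugate v \<bullet> (\<rho> *\<^sub>v v)) \<ge> 0) \<and>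
     mtrace \<rho> = 1"

(* A QMM (Sigma, Gamma, C^d, U, M); Sigma and Gamma are the finite types 's and 'g *)
definition qmm :: "nat \<Rightarrow> ('s::finite \<Rightarrow> complex mat) \<Rightarrow> ('g::finite \<Rightarrow> complex mat) \<Rightarrow> bool" where
  "qmm d U M \<longleftrightarrow> (\<forall>\<sigma>. unitary_op d (U \<sigma>)) \<and> (\<forall>\<gamma>. M \<gamma> \<in> carrier_mat d d) \<and>
     (\<forall>i < d. \<forall>j < d. (\<Sum>\<gamma>\<in>UNIV. (adj (M \<gamma>) * M \<gamma>) $$ (i, j)) = (1\<^sub>m d :: complex mat) $$ (i, j))"

fun Uword :: "('s \<Rightarrow> complex mat) \<Rightarrow> nat \<Rightarrow> 's list \<Rightarrow> complex mat" where
  "Uword U d [] = 1\<^sub>m d"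
| "Uword U d (\<sigma> # a) = Uword U d a * U \<sigma>"

(* Vseq U M d a p [(s_i,b_i),...,(s_m,b_m)] = U_{a[s_m+1:|a|]} M_{b_m} ... M_{b_i} U_{a[p+1:s_i]} *)
fun Vseq :: "('s \<Rightarrow> complex mat) \<Rightarrow> ('g \<Rightarrow> complex mat) \<Rightarrow> nat \<Rightarrow> 's list \<Rightarrow> nat \<Rightarrow> (nat \<times> 'g) list \<Rightarrow> complex mat" where
  "Vseq U M d a p [] = Uword U d (drop p a)"
| "Vseq U M d a p ((s, g) # sb) = Vseq U M d a s sb * M g * Uword U d (drop p (take s a))"

definition Vop :: "('s \<Rightarrow> complex mat) \<Rightarrow> ('g \<Rightarrow> complex mat) \<Rightarrow> nat \<Rightarrow> 'g list \<Rightarrow> 's list \<Rightarrow> nat list \<Rightarrow> complex mat" where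
  "Vop U M d b a S = Vseq U M d a 0 (zip S b)"

definition Prob :: "('s \<Rightarrow> complex mat) \<Rightarrow> ('g \<Rightarrow> complex mat) \<Rightarrow> nat \<Rightarrow> complex mat \<Rightarrow> 'g list \<Rightarrow> 's list \<Rightarrow> nat list \<Rightarrow> complex" where
  "Prob U M d \<rho> b a S = mtrace (Vop U M d b a S * \<rho> * adj (Vop U M d b a S))"

definition scheduler :: "'s list \<Rightarrow> nat list \<Rightarrow> bool" where
  "scheduler a S \<longleftrightarrow> sorted S \<and> (\<forall>s \<in> set S. s \<le> length a)"

definition k_equiv :: "nat \<Rightarrow> nat \<Rightarrow> ('s::finite \<Rightarrow> complex mat) \<Rightarrow> ('g::finite \<Rightarrow> complex mat) \<Rightarrow> complex mat \<Rightarrow>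
    nat \<Rightarrow> ('s \<Rightarrow> complex mat) \<Rightarrow> ('g \<Rightarrow> complex mat) \<Rightarrow> complex mat \<Rightarrow> bool" where
  "k_equiv k d1 U1 M1 \<rho>1 d2 U2 M2 \<rho>2 \<longleftrightarrow>
     (\<forall>a S b. scheduler a S \<and> length S \<le> k \<and> length b = length S \<longrightarrow>
        Prob U1 M1 d1 \<rho>1 b a S = Prob U2 M2 d2 \<rho>2 b a S)"

(* vectorization: entry (i-1)d+j (1-based) = rho_ij; 0-based: i*d+j *)
definition vectorize :: "nat \<Rightarrow> complex mat \<Rightarrow> complex vec" where
  "vectorize d \<rho> = vec (d * d) (\<lambda>k. \<rho> $$ (k div d, k mod d))"

(* hat A, with hat A_{(i,j),(x,y)} = A_{ix} * conj(A_{jy}) *)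
definition hat :: "nat \<Rightarrow> complex mat \<Rightarrow> complex mat" where
  "hat d A = mat (d * d) (d * d) (\<lambda>(r, c). A $$ (r div d, c div d) * cnj (A $$ (r mod d, c mod d)))"

definition eta :: "nat \<Rightarrow> complex vec" where
  "eta d = vec (d * d) (\<lambda>k. if k div d = k mod d then 1 else 0)"

definition block_diag :: "complex mat \<Rightarrow> complex mat \<Rightarrow> complex mat" where
  "block_diag A B = four_block_mat A (0\<^sub>m (dim_row A) (dim_col B)) (0\<^sub>m (dim_row B) (dim_col A)) B"

end

theory Submission
  imports Defs "Jordan_Normal_Form.VS_Connect"
begin

text \<open>
  Record a run as a single word over \<open>\<Sigma> + \<Gamma>\<close> of inputs and measurement outcomes. The runs
  (word, scheduler, outcomes) with \<open>m\<close> measurements are exactly the words with \<open>m\<close> outcome letters,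
  and \<open>V\<close> is the product of the matrices of the letters. Vectorization turns \<open>\<rho> \<mapsto> A \<rho> A\<^sup>\<dagger>\<close>
  into the linear map hat A and the trace into \<open>\<eta>\<^sub>d\<^sup>\<dagger>\<close>, so \<open>\<sim>\<^sub>k\<close> says that \<open>\<eta>\<close> is orthogonal to
  every vector of the joint orbit of \<open>v = (vec \<rho>\<^sub>1, vec \<rho>\<^sub>2)\<close> under words with at most \<open>k\<close>
  outcome letters. The orbit vectors with exactly \<open>l\<close> outcome letters form a set \<open>G\<^sub>l\<close>, mapped
  into itself by the input matrices and into \<open>G\<^sub>l\<^sub>+\<^sub>1\<close> by the outcome matrices. A matrix \<open>F\<^sub>l\<close>
  whose columns span \<open>G\<^sub>l\<close>, starting with \<open>v\<close> when \<open>l = 0\<close>, therefore satisfies (3) and (4),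
  and (2) is the orthogonality of \<open>\<eta>\<close> to \<open>G\<^sub>l\<close>. Conversely, (1), (3) and (4) put every orbit vector
  with \<open>l\<close> outcome letters into the column space of \<open>F\<^sub>l\<close>.
\<close>

section \<open>Histories\<close>

text \<open>A history lists the latest operation first, matching the order of operator products.\<close>

fun hist_eval :: "('s \<Rightarrow> 'a::semiring_1 mat) \<Rightarrow> ('g \<Rightarrow> 'a mat) \<Rightarrow> nat \<Rightarrow> ('s + 'g) list \<Rightarrow> 'a mat"
where
  "hist_eval A B d [] = 1\<^sub>m d"
| "hist_eval A B d (Inl \<sigma> # h) = A \<sigma> * hist_eval A B d h"
| "hist_eval A B d (Inr \<gamma> # h) = B \<gamma> * hist_eval A B d h"

fun meas_count :: "('s + 'g) list \<Rightarrow> nat" where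
  "meas_count [] = 0"
| "meas_count (Inl \<sigma> # h) = meas_count h"
| "meas_count (Inr \<gamma> # h) = Suc (meas_count h)"

definition square_ops :: "nat \<Rightarrow> ('s \<Rightarrow> 'a mat) \<Rightarrow> ('g \<Rightarrow> 'a mat) \<Rightarrow> bool" where
  "square_ops d A B \<longleftrightarrow> (\<forall>\<sigma>. A \<sigma> \<in> carrier_mat d d) \<and> (\<forall>\<gamma>. B \<gamma> \<in> carrier_mat d d)"

lemma square_opsD:
  assumes "square_ops d A B"
  shows "A \<sigma> \<in> carrier_mat d d" and "B \<gamma> \<in> carrier_mat d d"
  using assms unfolding square_ops_def by auto

lemma hist_eval_carrier: "square_ops d A B \<Longrightarrow> hist_eval A B d h \<in> carrier_mat d d"
  by (induction A B d h rule: hist_eval.induct) (auto simp: square_ops_def intro!: mult_carrier_mat)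

lemma hist_eval_append:
  assumes "square_ops d A B"
  shows "hist_eval A B d (h1 @ h2) = hist_eval A B d h1 * hist_eval A B d h2"
  using assms
proof (induction A B d h1 rule: hist_eval.induct)
  case (1 A B d)
  then show ?case using hist_eval_carrier[of d A B h2] by simp
next
  case (2 A B d \<sigma> h)
  then show ?case using hist_eval_carrier[OF "2.prems"]
    by (simp add: square_ops_def assoc_mult_mat[of _ d d _ d _ d])
next
  case (3 A B d \<gamma> h)
  then show ?case using hist_eval_carrier[OF "3.prems"]
    by (simp add: square_ops_def assoc_mult_mat[of _ d d _ d _ d])
qed

lemma assoc_mult_hist_eval_vec:
  assumes ops: "square_ops d A B" and X: "X \<in> carrier_mat d d" and v: "v \<in> carrier_vec d"
  shows "(X * hist_eval A B d h) *\<^sub>v v = X *\<^sub>v (hist_eval A B d h *\<^sub>v v)"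
  by (rule assoc_mult_mat_vec[OF X hist_eval_carrier[OF ops] v])

lemma meas_count_append: "meas_count (h1 @ h2) = meas_count h1 + meas_count h2"
  by (induction h1 rule: meas_count.induct) auto

section \<open>Schedulers as histories\<close>

definition word_hist :: "'s list \<Rightarrow> ('s + 'g) list" where
  "word_hist w = rev (map Inl w)"

text \<open>
  The run on the inputs of \<open>a\<close> after position \<open>p\<close>, with outcome \<open>g\<^sub>i\<close> measured after position
  \<open>s\<^sub>i\<close>; the recursion is that of \<open>Vseq\<close>.
\<close>

fun sched_hist :: "'s list \<Rightarrow> nat \<Rightarrow> (nat \<times> 'g) list \<Rightarrow> ('s + 'g) list" where
  "sched_hist a p [] = word_hist (drop p a)"
| "sched_hist a p ((s, g) # sb) = sched_hist a s sb @ [Inr g] @ word_hist (drop p (take s a))"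

lemma meas_count_word_hist: "meas_count (word_hist w) = 0"
  unfolding word_hist_def by (induction w) (auto simp: meas_count_append)

lemma meas_count_sched_hist: "meas_count (sched_hist a p sb) = length sb"
  by (induction a p sb rule: sched_hist.induct) (auto simp: meas_count_append meas_count_word_hist)

lemma Uword_eq_hist_eval:
  assumes ops: "square_ops d U M"
  shows "Uword U d w = hist_eval U M d (word_hist w)"
proof (induction w)
  case Nil
  show ?case by (simp add: word_hist_def)
next
  case (Cons \<sigma> w)
  have "hist_eval U M d (word_hist (\<sigma> # w)) = hist_eval U M d (word_hist w) * (U \<sigma> * 1\<^sub>m d)"
    unfolding word_hist_def using ops by (simp add: hist_eval_append)
  then show ?case using Cons right_mult_one_mat[OF square_opsD(1)[OF ops]] by simp
qed

lemma Vseq_eq_hist_eval: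
  assumes ops: "square_ops d U M"
  shows "Vseq U M d a p sb = hist_eval U M d (sched_hist a p sb)"
proof (induction a p sb rule: sched_hist.induct)
  case (1 a p)
  show ?case by (simp add: Uword_eq_hist_eval[OF ops])
next
  case (2 a p s g sb)
  then show ?case
    using hist_eval_carrier[OF ops] square_opsD(2)[OF ops]
    by (simp add: Uword_eq_hist_eval[OF ops] hist_eval_append[OF ops] assoc_mult_mat[of _ d d _ d _ d])
qed

lemma sched_hist_snoc_letter:
  assumes "\<forall>x \<in> set sb. fst x \<le> length a" and "p \<le> length a"
  shows "sched_hist (a @ [\<sigma>]) p sb = Inl \<sigma> # sched_hist a p sb"
  using assms by (induction sb arbitrary: p) (auto simp: word_hist_def)

lemma sched_hist_snoc_outcome:
  "sched_hist a p (sb @ [(length a, \<gamma>)]) = Inr \<gamma> # sched_hist a p sb"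
  by (induction sb arbitrary: p) (auto simp: word_hist_def)

lemma sched_hist_surj:
  "\<exists>a S b. scheduler a S \<and> length S = meas_count h \<and> length b = meas_count h
     \<and> sched_hist a 0 (zip S b) = h"
proof (induction h rule: meas_count.induct)
  case 1
  show ?case by (rule exI[of _ "[]"], rule exI[of _ "[]"], rule exI[of _ "[]"])
    (simp add: scheduler_def word_hist_def)
next
  case (2 \<sigma> h)
  then obtain a S b where IH: "scheduler a S" "length S = meas_count h" "length b = meas_count h"
    "sched_hist a 0 (zip S b) = h" by blast
  have "\<forall>x \<in> set (zip S b). fst x \<le> length a"
    using IH(1) unfolding scheduler_def by (auto dest: set_zip_leftD)
  then have "sched_hist (a @ [\<sigma>]) 0 (zip S b) = Inl \<sigma> # h"
    using IH(4) sched_hist_snoc_letter by fastforce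
  moreover have "scheduler (a @ [\<sigma>]) S" using IH(1) unfolding scheduler_def by auto
  ultimately show ?case using IH(2,3) by auto
next
  case (3 \<gamma> h)
  then obtain a S b where IH: "scheduler a S" "length S = meas_count h" "length b = meas_count h"
    "sched_hist a 0 (zip S b) = h" by blast
  have "zip (S @ [length a]) (b @ [\<gamma>]) = zip S b @ [(length a, \<gamma>)]" using IH(2,3) by simp
  then have "sched_hist a 0 (zip (S @ [length a]) (b @ [\<gamma>])) = Inr \<gamma> # h"
    using IH(4) by (simp add: sched_hist_snoc_outcome)
  moreover have "scheduler a (S @ [length a])"
    using IH(1) unfolding scheduler_def by (auto simp: sorted_append)
  ultimately show ?case using IH(2,3) by (intro exI[of _ a] exI[of _ "S @ [length a]"] exI[of _ "b @ [\<gamma>]"]) auto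
qed

lemma k_equiv_iff_hist_traces:
  fixes U1 U2 :: "'s::finite \<Rightarrow> complex mat" and M1 M2 :: "'g::finite \<Rightarrow> complex mat"
  assumes ops1: "square_ops n1 U1 M1" and ops2: "square_ops n2 U2 M2"
  shows "k_equiv k n1 U1 M1 \<rho>1 n2 U2 M2 \<rho>2 \<longleftrightarrow> (\<forall>h. meas_count h \<le> k \<longrightarrow>
    mtrace (hist_eval U1 M1 n1 h * \<rho>1 * adj (hist_eval U1 M1 n1 h))
      = mtrace (hist_eval U2 M2 n2 h * \<rho>2 * adj (hist_eval U2 M2 n2 h)))"
    (is "_ \<longleftrightarrow> (\<forall>h. _ \<longrightarrow> ?out1 h = ?out2 h)")
proof -
  have Prob: "Prob U M d \<rho> b a S = mtrace (hist_eval U M d (sched_hist a 0 (zip S b)) * \<rho>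
      * adj (hist_eval U M d (sched_hist a 0 (zip S b))))" if "square_ops d U M" for U M d \<rho> b a S
    unfolding Prob_def Vop_def Vseq_eq_hist_eval[OF that] ..
  show ?thesis
  proof (intro iffI allI impI)
    fix h :: "('s + 'g) list"
    assume equiv: "k_equiv k n1 U1 M1 \<rho>1 n2 U2 M2 \<rho>2" and "meas_count h \<le> k"
    obtain a S b where sched: "scheduler a S" "length S = meas_count h" "length b = meas_count h"
      and h: "sched_hist a 0 (zip S b) = h"
      using sched_hist_surj by blast
    have "Prob U1 M1 n1 \<rho>1 b a S = Prob U2 M2 n2 \<rho>2 b a S"
      using equiv sched \<open>meas_count h \<le> k\<close> unfolding k_equiv_def by simp
    then show "?out1 h = ?out2 h" unfolding Prob[OF ops1] Prob[OF ops2] h .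
  next
    assume "\<forall>h. meas_count h \<le> k \<longrightarrow> ?out1 h = ?out2 h"
    then show "k_equiv k n1 U1 M1 \<rho>1 n2 U2 M2 \<rho>2"
      unfolding k_equiv_def Prob[OF ops1] Prob[OF ops2] by (simp add: meas_count_sched_hist)
  qed
qed

section \<open>Matrices whose columns span a set of vectors\<close>

lemma (in vec_space) lin_indpt_extends_to_spanning:
  assumes G: "G \<subseteq> carrier_vec n" and I: "I \<subseteq> G" "lin_indpt I"
  shows "\<exists>T. I \<subseteq> T \<and> T \<subseteq> G \<and> finite T \<and> card T \<le> n \<and> G \<subseteq> span T"
proof -
  let ?P = "\<lambda>S. I \<subseteq> S \<and> S \<subseteq> G \<and> lin_indpt S"
  have bound: "finite S \<and> card S \<le> n" if "?P S" for S
    using li_le_dim[of S] that G dim_is_n by auto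
  obtain T where "finite T" and max: "maximal T ?P"
    using maximal_exists[of ?P n I, OF bound] I by auto
  have T: "?P T" using max unfolding maximal_def by auto
  have "G \<subseteq> span T"
  proof
    fix g assume g: "g \<in> G"
    show "g \<in> span T"
    proof (rule ccontr)
      assume g_new: "g \<notin> span T"
      have T_carrier: "T \<subseteq> carrier_vec n" using T G by auto
      have "g \<notin> T" using g_new in_own_span[OF T_carrier] by auto
      then have "lin_indpt (T \<union> {g})"
        using lin_dep_iff_in_span[OF T_carrier _ _ \<open>g \<notin> T\<close>] T g G g_new by auto
      then have "T \<union> {g} = T" using max T g unfolding maximal_def by blast
      then show False using \<open>g \<notin> T\<close> by auto
    qed
  qed
  then show ?thesis using T bound[OF T] by blast
qed

lemma spanning_mat_with_first_col:
  fixes G :: "'a::field vec set"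
  assumes G: "G \<subseteq> carrier_vec n" and v: "v \<in> G" "v \<noteq> 0\<^sub>v n"
  shows "\<exists>F \<in> carrier_mat n n. col F 0 = v \<and> (\<forall>j<n. col F j \<in> insert (0\<^sub>v n) G)
           \<and> G \<subseteq> mult_mat_vec F ` carrier_vec n"
proof -
  interpret vec_space "TYPE('a)" n .
  have v_carrier: "v \<in> carrier_vec n" using G v by auto
  have "lin_indpt {v}"
    using lin_dep_iff_in_span[of "{}" v] v_carrier v span_empty
    by (auto simp: lin_dep_def)
  then obtain T where T: "v \<in> T" "T \<subseteq> G" "finite T" "card T \<le> n" "G \<subseteq> span T"
    using lin_indpt_extends_to_spanning[OF G, of "{v}"] v by auto
  obtain ts where ts: "set ts = T - {v}" "distinct ts"
    using finite_distinct_list[of "T - {v}"] T by auto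
  have "card T > 0" using T card_gt_0_iff by auto
  then have "length ts + 1 = card T"
    using T distinct_card[OF ts(2)] by (simp add: ts(1) card_Diff_singleton)
  define cs where "cs = v # ts @ replicate (n - card T) (0\<^sub>v n)"
  have cs_length: "length cs = n" unfolding cs_def using T \<open>length ts + 1 = card T\<close> by simp
  have cs_carrier: "set cs \<subseteq> carrier_vec n" unfolding cs_def using T G ts v_carrier by auto
  define F where "F = mat_of_cols n cs"
  have F: "F \<in> carrier_mat n n" unfolding F_def using cs_length by auto
  have col_F: "col F j = cs ! j" if "j < n" for j
    unfolding F_def using that cs_length cs_carrier by (simp add: subsetD)
  have "T \<subseteq> set cs" using ts unfolding cs_def by auto
  then have "G \<subseteq> span (set cs)" using T(5) span_is_monotone by blast
  also have "span (set cs) = col_space F"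
    unfolding col_space_def F_def using cs_carrier by simp
  also have "\<dots> \<subseteq> mult_mat_vec F ` carrier_vec n"
    using col_space_eq[OF F] F by auto
  finally have "G \<subseteq> mult_mat_vec F ` carrier_vec n" .
  moreover have "col F 0 = v" using col_F[of 0] cs_length by (simp add: cs_def)
  moreover have "col F j \<in> insert (0\<^sub>v n) G" if "j < n" for j
    using col_F[OF that] nth_mem[of j cs] that cs_length T ts unfolding cs_def by auto
  ultimately show ?thesis using F by blast
qed

lemma spanning_mat_exists:
  fixes G :: "'a::field vec set"
  assumes G: "G \<subseteq> carrier_vec n"
  shows "\<exists>F \<in> carrier_mat n n. (\<forall>j<n. col F j \<in> insert (0\<^sub>v n) G)
           \<and> G \<subseteq> mult_mat_vec F ` carrier_vec n"
proof (cases "G \<subseteq> {0\<^sub>v n}")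
  case True
  have "0\<^sub>v n \<in> mult_mat_vec (0\<^sub>m n n) ` carrier_vec n"
    by (rule image_eqI[of _ _ "0\<^sub>v n"]) auto
  then have "G \<subseteq> mult_mat_vec (0\<^sub>m n n) ` carrier_vec n"
    using True by auto
  then show ?thesis using True by (intro bexI[of _ "0\<^sub>m n n"]) auto
next
  case False
  then obtain v where "v \<in> G" "v \<noteq> 0\<^sub>v n" by auto
  from spanning_mat_with_first_col[OF G this] show ?thesis by blast
qed

lemma mat_factor_exists:
  fixes F B :: "'a::semiring_0 mat"
  assumes F: "F \<in> carrier_mat n m" and B: "B \<in> carrier_mat n p"
    and cols: "\<And>j. j < p \<Longrightarrow> col B j \<in> mult_mat_vec F ` carrier_vec m"
  shows "\<exists>A \<in> carrier_mat m p. B = F * A"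
proof -
  have "\<forall>j \<in> {..<p}. \<exists>x. x \<in> carrier_vec m \<and> col B j = F *\<^sub>v x"
    using cols by blast
  from bchoice[OF this] obtain x
    where x: "\<forall>j \<in> {..<p}. x j \<in> carrier_vec m \<and> col B j = F *\<^sub>v x j"
    by blast
  define A where "A = mat m p (\<lambda>(i, j). x j $ i)"
  have col_A: "col A j = x j" if "j < p" for j
  proof -
    have "x j \<in> carrier_vec m" using x that by auto
    then show ?thesis using that unfolding A_def by (intro eq_vecI) auto
  qed
  have "B = F * A"
  proof (rule eq_matI)
    fix i j assume "i < dim_row (F * A)" "j < dim_col (F * A)"
    then have i: "i < n" and j: "j < p" using F unfolding A_def by auto
    have "(F * A) $$ (i, j) = (F *\<^sub>v x j) $ i" using col_A[OF j] i j F unfolding A_def by simp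
    also have "\<dots> = col B j $ i" using x j by auto
    also have "\<dots> = B $$ (i, j)" using B i j by simp
    finally show "B $$ (i, j) = (F * A) $$ (i, j)" by simp
  qed (use F B in \<open>auto simp: A_def\<close>)
  then show ?thesis unfolding A_def by auto
qed

lemma mat_factor_through_spanning_mat:
  fixes F F' B :: "'a::semiring_0 mat"
  assumes F: "F \<in> carrier_mat n n" and F': "F' \<in> carrier_mat n' m" and B: "B \<in> carrier_mat n' n"
    and cols: "\<forall>j<n. col F j \<in> insert (0\<^sub>v n) S"
    and maps: "mult_mat_vec B ` S \<subseteq> S'" and spans: "S' \<subseteq> mult_mat_vec F' ` carrier_vec m"
  shows "\<exists>A \<in> carrier_mat m n. B * F = F' * A"
proof (rule mat_factor_exists[OF F'])
  show "B * F \<in> carrier_mat n' n" using B F by simp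
  fix j assume j: "j < n"
  have "col (B * F) j = B *\<^sub>v col F j" by (rule col_mult2[OF B F j])
  moreover have "B *\<^sub>v col F j \<in> insert (B *\<^sub>v 0\<^sub>v n) S'"
    using cols[rule_format, OF j] maps by (auto simp: image_subset_iff)
  moreover have "B *\<^sub>v 0\<^sub>v n \<in> mult_mat_vec F' ` carrier_vec m"
    using B F' by (intro image_eqI[of _ _ "0\<^sub>v m"]) auto
  ultimately show "col (B * F) j \<in> mult_mat_vec F' ` carrier_vec m"
    using spans by auto
qed

lemma mat_of_row_mult_eq_0:
  fixes c :: "'a::semiring_0 vec"
  assumes c: "c \<in> carrier_vec n" and F: "F \<in> carrier_mat n m"
    and orth: "\<And>j. j < m \<Longrightarrow> c \<bullet> col F j = 0"
  shows "mat_of_row c * F = 0\<^sub>m 1 m"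
  using c F orth by (intro eq_matI) auto

lemma scalar_prod_mult_mat_vec_eq_0:
  fixes c :: "'a::comm_semiring_0 vec"
  assumes F: "F \<in> carrier_mat n n" and c: "c \<in> carrier_vec n" and x: "x \<in> carrier_vec n"
    and orth: "mat_of_row c * F = 0\<^sub>m 1 n"
  shows "c \<bullet> (F *\<^sub>v x) = 0"
proof -
  have "c \<bullet> (F *\<^sub>v x) = (mat_of_row c *\<^sub>v (F *\<^sub>v x)) $ 0" by simp
  also have "\<dots> = ((mat_of_row c * F) *\<^sub>v x) $ 0"
    using F c x by (subst assoc_mult_mat_vec[of _ 1 n _ n]) auto
  also have "\<dots> = 0" unfolding orth using x by simp
  finally show ?thesis .
qed

lemma mult_unit_vec_eq_col:
  fixes A :: "'a::semiring_1 mat"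
  assumes A: "A \<in> carrier_mat m n" and j: "j < n"
  shows "A *\<^sub>v unit_vec n j = col A j"
proof (rule eq_vecI)
  fix i assume "i < dim_vec (col A j)"
  then have i: "i < m" using A by simp
  have "row A i \<bullet> unit_vec n j = (\<Sum>x\<in>{0..<n}. row A i $ x * (if x = j then 1 else 0))"
    using j unfolding scalar_prod_def by (intro sum.cong) auto
  also have "\<dots> = row A i $ j" using j by (simp add: if_distrib[of "\<lambda>t. _ * t"] cong: if_cong)
  finally show "(A *\<^sub>v unit_vec n j) $ i = col A j $ i" using i A j by simp
qed (use A in auto)

section \<open>Orbits and their certificates\<close>

definition orbit_layer ::
  "('s \<Rightarrow> 'a::semiring_1 mat) \<Rightarrow> ('g \<Rightarrow> 'a mat) \<Rightarrow> nat \<Rightarrow> 'a vec \<Rightarrow> nat \<Rightarrow> 'a vec set" where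
  "orbit_layer A B d v l = {hist_eval A B d h *\<^sub>v v | h. meas_count h = l}"

context
  fixes W :: "'s \<Rightarrow> 'a::field mat" and N :: "'g \<Rightarrow> 'a mat" and n :: nat and v :: "'a vec"
  assumes ops: "square_ops n W N" and v: "v \<in> carrier_vec n"
begin

lemma orbit_layer_carrier: "orbit_layer W N n v l \<subseteq> carrier_vec n"
  using mult_mat_vec_carrier[OF hist_eval_carrier[OF ops] v] unfolding orbit_layer_def by auto

lemma orbit_layer_Inl: "mult_mat_vec (W \<sigma>) ` orbit_layer W N n v l \<subseteq> orbit_layer W N n v l"
proof
  fix u assume "u \<in> mult_mat_vec (W \<sigma>) ` orbit_layer W N n v l"
  then obtain h where "meas_count h = l" "u = W \<sigma> *\<^sub>v (hist_eval W N n h *\<^sub>v v)"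
    unfolding orbit_layer_def by auto
  then show "u \<in> orbit_layer W N n v l" unfolding orbit_layer_def
    by (intro CollectI exI[of _ "Inl \<sigma> # h"]) (simp add: assoc_mult_hist_eval_vec[OF ops square_opsD(1)[OF ops] v])
qed

lemma orbit_layer_Inr: "mult_mat_vec (N \<gamma>) ` orbit_layer W N n v l \<subseteq> orbit_layer W N n v (Suc l)"
proof
  fix u assume "u \<in> mult_mat_vec (N \<gamma>) ` orbit_layer W N n v l"
  then obtain h where "meas_count h = l" "u = N \<gamma> *\<^sub>v (hist_eval W N n h *\<^sub>v v)"
    unfolding orbit_layer_def by auto
  then show "u \<in> orbit_layer W N n v (Suc l)" unfolding orbit_layer_def
    by (intro CollectI exI[of _ "Inr \<gamma> # h"]) (simp add: assoc_mult_hist_eval_vec[OF ops square_opsD(2)[OF ops] v])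
qed

lemma orbit_in_certificate_col_space:
  assumes n: "0 < n"
    and F: "\<forall>l \<le> k. F l \<in> carrier_mat n n"
    and AS: "\<forall>l \<le> k. \<forall>\<sigma>. AS l \<sigma> \<in> carrier_mat n n"
    and AG: "\<forall>l < k. \<forall>\<gamma>. AG l \<gamma> \<in> carrier_mat n n"
    and F0: "col (F 0) 0 = v"
    and W_F: "\<forall>\<sigma>. \<forall>l \<le> k. W \<sigma> * F l = F l * AS l \<sigma>"
    and N_F: "\<forall>\<gamma>. \<forall>l < k. N \<gamma> * F l = F (Suc l) * AG l \<gamma>"
  shows "meas_count h \<le> k \<Longrightarrow> hist_eval W N n h *\<^sub>v v \<in> mult_mat_vec (F (meas_count h)) ` carrier_vec n"
proof (induction h rule: meas_count.induct)
  case 1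
  have "F 0 *\<^sub>v unit_vec n 0 = v" using F F0 n mult_unit_vec_eq_col[of "F 0" n n 0] by auto
  then show ?case using v by (auto intro!: image_eqI[of _ _ "unit_vec n 0"])
next
  case (2 \<sigma> h)
  let ?l = "meas_count h"
  obtain x where x: "x \<in> carrier_vec n" "hist_eval W N n h *\<^sub>v v = F ?l *\<^sub>v x"
    using 2 by auto
  have F_l: "F ?l \<in> carrier_mat n n" and AS_l: "AS ?l \<sigma> \<in> carrier_mat n n"
    using F AS "2.prems" by auto
  have "hist_eval W N n (Inl \<sigma> # h) *\<^sub>v v = (W \<sigma> * F ?l) *\<^sub>v x"
    using x assoc_mult_mat_vec[OF square_opsD(1)[OF ops] F_l x(1)]
    by (simp add: assoc_mult_hist_eval_vec[OF ops square_opsD(1)[OF ops] v])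
  also have "\<dots> = F ?l *\<^sub>v (AS ?l \<sigma> *\<^sub>v x)"
    using W_F assoc_mult_mat_vec[OF F_l AS_l x(1)] "2.prems" by simp
  finally show ?case using mult_mat_vec_carrier[OF AS_l x(1)] by auto
next
  case (3 \<gamma> h)
  let ?l = "meas_count h"
  obtain x where x: "x \<in> carrier_vec n" "hist_eval W N n h *\<^sub>v v = F ?l *\<^sub>v x"
    using 3 by auto
  have F_l: "F ?l \<in> carrier_mat n n" and F_Suc_l: "F (Suc ?l) \<in> carrier_mat n n"
    and AG_l: "AG ?l \<gamma> \<in> carrier_mat n n"
    using F AG "3.prems" by auto
  have "hist_eval W N n (Inr \<gamma> # h) *\<^sub>v v = (N \<gamma> * F ?l) *\<^sub>v x"
    using x assoc_mult_mat_vec[OF square_opsD(2)[OF ops] F_l x(1)]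
    by (simp add: assoc_mult_hist_eval_vec[OF ops square_opsD(2)[OF ops] v])
  also have "\<dots> = F (Suc ?l) *\<^sub>v (AG ?l \<gamma> *\<^sub>v x)"
    using N_F assoc_mult_mat_vec[OF F_Suc_l AG_l x(1)] "3.prems" by simp
  finally show ?case using mult_mat_vec_carrier[OF AG_l x(1)] by auto
qed

lemma orbit_spanning_certificate_exists:
  assumes v_nonzero: "v \<noteq> 0\<^sub>v n"
  shows "\<exists>F AS AG. (\<forall>l. F l \<in> carrier_mat n n) \<and> (\<forall>l \<sigma>. AS l \<sigma> \<in> carrier_mat n n) \<and>
    (\<forall>l \<gamma>. AG l \<gamma> \<in> carrier_mat n n) \<and> col (F 0) 0 = v \<and>
    (\<forall>l. \<forall>j<n. col (F l) j \<in> insert (0\<^sub>v n) (orbit_layer W N n v l)) \<and>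
    (\<forall>\<sigma> l. W \<sigma> * F l = F l * AS l \<sigma>) \<and> (\<forall>\<gamma> l. N \<gamma> * F l = F (Suc l) * AG l \<gamma>)"
proof -
  let ?G = "orbit_layer W N n v"
  let ?spans = "\<lambda>l F. F \<in> carrier_mat n n \<and> (\<forall>j<n. col F j \<in> insert (0\<^sub>v n) (?G l))
    \<and> ?G l \<subseteq> mult_mat_vec F ` carrier_vec n"
  have "v \<in> ?G 0" unfolding orbit_layer_def using v by (auto intro!: exI[of _ "[]"])
  then obtain F0 where F0: "?spans 0 F0" "col F0 0 = v"
    using spanning_mat_with_first_col[OF orbit_layer_carrier _ v_nonzero] by blast
  have "\<forall>l. \<exists>F. ?spans l F" using spanning_mat_exists[OF orbit_layer_carrier] by blast
  from choice[OF this] obtain Fs where Fs: "\<And>l. ?spans l (Fs l)" by blast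
  define F where "F l = (if l = 0 then F0 else Fs l)" for l
  have F: "?spans l (F l)" for l using F0 Fs unfolding F_def by auto
  have AS_ex: "\<exists>A. A \<in> carrier_mat n n \<and> W \<sigma> * F l = F l * A" for \<sigma> l
    using mat_factor_through_spanning_mat[OF _ _ square_opsD(1)[OF ops] _ orbit_layer_Inl] F[of l] by blast
  have AG_ex: "\<exists>A. A \<in> carrier_mat n n \<and> N \<gamma> * F l = F (Suc l) * A" for \<gamma> l
    using mat_factor_through_spanning_mat[OF _ _ square_opsD(2)[OF ops] _ orbit_layer_Inr] F[of l] F[of "Suc l"]
    by blast
  define AS where "AS l \<sigma> = (SOME A. A \<in> carrier_mat n n \<and> W \<sigma> * F l = F l * A)" for l \<sigma>
  define AG where "AG l \<gamma> = (SOME A. A \<in> carrier_mat n n \<and> N \<gamma> * F l = F (Suc l) * A)" for l \<gamma>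
  have AS: "AS l \<sigma> \<in> carrier_mat n n \<and> W \<sigma> * F l = F l * AS l \<sigma>" for \<sigma> l
    unfolding AS_def by (rule someI_ex[OF AS_ex])
  have AG: "AG l \<gamma> \<in> carrier_mat n n \<and> N \<gamma> * F l = F (Suc l) * AG l \<gamma>" for \<gamma> l
    unfolding AG_def by (rule someI_ex[OF AG_ex])
  have "col (F 0) 0 = v" using F0 unfolding F_def by simp
  then show ?thesis using F AS AG by (intro exI[of _ F] exI[of _ AS] exI[of _ AG]) auto
qed

theorem orbit_annihilated_iff_certificate:
  assumes v_nonzero: "v \<noteq> 0\<^sub>v n" and c: "c \<in> carrier_vec n"
  shows "(\<forall>h. meas_count h \<le> k \<longrightarrow> c \<bullet> (hist_eval W N n h *\<^sub>v v) = 0) \<longleftrightarrow>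
    (\<exists>(F :: nat \<Rightarrow> 'a mat) (AS :: nat \<Rightarrow> 's \<Rightarrow> 'a mat) (AG :: nat \<Rightarrow> 'g \<Rightarrow> 'a mat).
       (\<forall>l \<le> k. F l \<in> carrier_mat n n) \<and>
       (\<forall>l \<le> k. \<forall>\<sigma>. AS l \<sigma> \<in> carrier_mat n n) \<and>
       (\<forall>l < k. \<forall>\<gamma>. AG l \<gamma> \<in> carrier_mat n n) \<and>
       col (F 0) 0 = v \<and>
       (\<forall>l \<le> k. mat_of_row c * F l = 0\<^sub>m 1 n) \<and>
       (\<forall>\<sigma>. \<forall>l \<le> k. W \<sigma> * F l = F l * AS l \<sigma>) \<and>
       (\<forall>\<gamma>. \<forall>l < k. N \<gamma> * F l = F (Suc l) * AG l \<gamma>))"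
  (is "?annihilated \<longleftrightarrow> ?certificate")
proof
  assume ?annihilated
  obtain F AS AG where F: "\<forall>l. F l \<in> carrier_mat n n"
    and AS: "\<forall>l \<sigma>. AS l \<sigma> \<in> carrier_mat n n" and AG: "\<forall>l \<gamma>. AG l \<gamma> \<in> carrier_mat n n"
    and F0: "col (F 0) 0 = v"
    and cols: "\<forall>l. \<forall>j<n. col (F l) j \<in> insert (0\<^sub>v n) (orbit_layer W N n v l)"
    and W_F: "\<forall>\<sigma> l. W \<sigma> * F l = F l * AS l \<sigma>" and N_F: "\<forall>\<gamma> l. N \<gamma> * F l = F (Suc l) * AG l \<gamma>"
    using orbit_spanning_certificate_exists[OF v_nonzero] by blast
  have orth: "mat_of_row c * F l = 0\<^sub>m 1 n" if "l \<le> k" for l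
  proof (rule mat_of_row_mult_eq_0[OF c F[rule_format]])
    fix j assume "j < n"
    then show "c \<bullet> col (F l) j = 0"
      using cols[rule_format, of j l] \<open>?annihilated\<close> that c unfolding orbit_layer_def by auto
  qed
  show ?certificate
    using F AS AG F0 orth W_F N_F by (intro exI[of _ F] exI[of _ AS] exI[of _ AG]) simp
next
  assume ?certificate
  then obtain F AS AG where F: "\<forall>l \<le> k. F l \<in> carrier_mat n n"
    and cert: "\<forall>l \<le> k. \<forall>\<sigma>. AS l \<sigma> \<in> carrier_mat n n" "\<forall>l < k. \<forall>\<gamma>. AG l \<gamma> \<in> carrier_mat n n"
      "col (F 0) 0 = v" "\<forall>\<sigma>. \<forall>l \<le> k. W \<sigma> * F l = F l * AS l \<sigma>"
      "\<forall>\<gamma>. \<forall>l < k. N \<gamma> * F l = F (Suc l) * AG l \<gamma>"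
    and orth: "\<forall>l \<le> k. mat_of_row c * F l = 0\<^sub>m 1 n"
    by blast
  have "0 < n" using v v_nonzero by (cases n) auto
  show ?annihilated
  proof (intro allI impI)
    fix h :: "('s + 'g) list" assume hk: "meas_count h \<le> k"
    then obtain x where "x \<in> carrier_vec n" "hist_eval W N n h *\<^sub>v v = F (meas_count h) *\<^sub>v x"
      using orbit_in_certificate_col_space[OF \<open>0 < n\<close> F cert] by auto
    then show "c \<bullet> (hist_eval W N n h *\<^sub>v v) = 0"
      using scalar_prod_mult_mat_vec_eq_0[of "F (meas_count h)" n c x] F orth c hk by simp
  qed
qed

end

section \<open>Vectorization\<close>

lemma dim_adj [simp]: "dim_row (adj A) = dim_col A" "dim_col (adj A) = dim_row A"
  unfolding adj_def by auto

lemma adj_index: "i < dim_col A \<Longrightarrow> j < dim_row A \<Longrightarrow> adj A $$ (i, j) = cnj (A $$ (j, i))"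
  unfolding adj_def by auto

lemma adj_carrier: "A \<in> carrier_mat n m \<Longrightarrow> adj A \<in> carrier_mat m n"
  unfolding adj_def by auto

lemma adj_one: "adj (1\<^sub>m d) = 1\<^sub>m d"
  by (rule eq_matI) (auto simp: adj_index)

lemma adj_mult:
  assumes A: "A \<in> carrier_mat m k" and B: "B \<in> carrier_mat k l"
  shows "adj (A * B) = adj B * adj A"
proof (rule eq_matI)
  fix i j assume "i < dim_row (adj B * adj A)" "j < dim_col (adj B * adj A)"
  then have i: "i < l" and j: "j < m" using A B by auto
  have "adj (A * B) $$ (i, j) = cnj (\<Sum>x<k. A $$ (j, x) * B $$ (x, i))"
    using A B i j by (simp add: adj_index scalar_prod_def atLeast0LessThan)
  also have "\<dots> = (\<Sum>x<k. cnj (B $$ (x, i)) * cnj (A $$ (j, x)))"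
    by (simp add: mult.commute)
  also have "\<dots> = (adj B * adj A) $$ (i, j)"
    using A B i j by (simp add: scalar_prod_def atLeast0LessThan adj_index)
  finally show "adj (A * B) $$ (i, j) = (adj B * adj A) $$ (i, j)" .
qed (use A B in auto)

lemma hat_carrier [simp]: "hat d A \<in> carrier_mat (d * d) (d * d)"
  unfolding hat_def by simp

lemma vectorize_carrier [simp]: "vectorize d X \<in> carrier_vec (d * d)"
  unfolding vectorize_def by simp

lemma eta_carrier [simp]: "eta d \<in> carrier_vec (d * d)"
  unfolding eta_def by simp

lemma sum_lessThan_square:
  fixes f :: "nat \<Rightarrow> 'a::comm_monoid_add"
  shows "(\<Sum>c<d * d. f c) = (\<Sum>x<d. \<Sum>y<d. f (x * d + y))"
proof -
  have "(\<Sum>c<d * d. f c) = (\<Sum>x<d. sum f {x * d..<x * d + d})"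
    using sum.nat_group[of f d d] by simp
  also have "\<dots> = (\<Sum>x<d. \<Sum>y<d. f (x * d + y))"
  proof (rule sum.cong[OF refl])
    fix x
    have "sum f {x * d..<x * d + d} = sum f {0 + x * d..<d + x * d}" by (simp add: add.commute)
    also have "\<dots> = (\<Sum>y = 0..<d. f (y + x * d))" by (rule sum.shift_bounds_nat_ivl)
    finally show "sum f {x * d..<x * d + d} = (\<Sum>y<d. f (x * d + y))"
      by (simp add: atLeast0LessThan add.commute)
  qed
  finally show ?thesis .
qed

lemma vectorize_conj_action:
  assumes A: "A \<in> carrier_mat d d" and X: "X \<in> carrier_mat d d"
  shows "vectorize d (A * X * adj A) = hat d A *\<^sub>v vectorize d X"
proof (rule eq_vecI)
  fix k assume "k < dim_vec (hat d A *\<^sub>v vectorize d X)"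
  then have k: "k < d * d" by (simp add: hat_def)
  define i j where "i = k div d" and "j = k mod d"
  have "0 < d" using k by (cases d) auto
  then have i: "i < d" and j: "j < d"
    using k unfolding i_def j_def by (auto simp: less_mult_imp_div_less)
  have "vectorize d (A * X * adj A) $ k = (\<Sum>y<d. (\<Sum>x<d. A $$ (i, x) * X $$ (x, y)) * cnj (A $$ (j, y)))"
    using A X i j k unfolding vectorize_def i_def j_def
    by (simp add: scalar_prod_def atLeast0LessThan adj_index)
  also have "\<dots> = (\<Sum>x<d. \<Sum>y<d. A $$ (i, x) * cnj (A $$ (j, y)) * X $$ (x, y))"
    by (subst sum.swap) (auto simp: sum_distrib_right intro!: sum.cong)
  also have "\<dots> = (\<Sum>c<d * d. A $$ (i, c div d) * cnj (A $$ (j, c mod d)) * X $$ (c div d, c mod d))"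
    unfolding sum_lessThan_square by (intro sum.cong refl) auto
  also have "\<dots> = (hat d A *\<^sub>v vectorize d X) $ k"
    using k by (simp add: hat_def vectorize_def scalar_prod_def atLeast0LessThan i_def j_def)
  finally show "vectorize d (A * X * adj A) $ k = (hat d A *\<^sub>v vectorize d X) $ k" .
qed (simp add: vectorize_def hat_def)

lemma eta_scalar_prod_vectorize:
  assumes A: "A \<in> carrier_mat d d"
  shows "eta d \<bullet> vectorize d A = mtrace A"
proof -
  have "eta d \<bullet> vectorize d A
      = (\<Sum>c<d * d. (if c div d = c mod d then 1 else 0) * A $$ (c div d, c mod d))"
    by (simp add: eta_def vectorize_def scalar_prod_def atLeast0LessThan)
  also have "\<dots> = (\<Sum>x<d. \<Sum>y<d. (if x = y then 1 else 0) * A $$ (x, y))"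
    unfolding sum_lessThan_square by (intro sum.cong refl) auto
  also have "\<dots> = mtrace A"
    using A unfolding mtrace_def by (simp add: if_distrib[of "\<lambda>t. t * _"] cong: if_cong)
  finally show ?thesis .
qed

lemma vectorize_hist_eval:
  assumes ops: "square_ops d U M" and \<rho>: "\<rho> \<in> carrier_mat d d"
  shows "vectorize d (hist_eval U M d h * \<rho> * adj (hist_eval U M d h))
    = hist_eval (\<lambda>\<sigma>. hat d (U \<sigma>)) (\<lambda>\<gamma>. hat d (M \<gamma>)) (d * d) h *\<^sub>v vectorize d \<rho>"
proof -
  let ?U = "\<lambda>\<sigma>. hat d (U \<sigma>)" and ?M = "\<lambda>\<gamma>. hat d (M \<gamma>)"
  have hat_ops: "square_ops (d * d) ?U ?M" unfolding square_ops_def by simp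
  have step: "vectorize d ((A * E) * \<rho> * adj (A * E)) = (hat d A * hist_eval ?U ?M (d * d) h) *\<^sub>v vectorize d \<rho>"
    if A: "A \<in> carrier_mat d d" and E: "E = hist_eval U M d h"
      and IH: "vectorize d (E * \<rho> * adj E) = hist_eval ?U ?M (d * d) h *\<^sub>v vectorize d \<rho>" for A E h
  proof -
    have E_carrier: "E \<in> carrier_mat d d" using E hist_eval_carrier[OF ops] by simp
    have "(A * E) * \<rho> * adj (A * E) = A * (E * \<rho> * adj E) * adj A"
      using A E_carrier \<rho> adj_carrier[OF A] adj_carrier[OF E_carrier]
      by (simp add: adj_mult[OF A E_carrier] assoc_mult_mat[of _ d d _ d _ d])
    then have "vectorize d ((A * E) * \<rho> * adj (A * E)) = hat d A *\<^sub>v vectorize d (E * \<rho> * adj E)"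
      using vectorize_conj_action[OF A, of "E * \<rho> * adj E"] E_carrier \<rho> adj_carrier[OF E_carrier]
      by simp
    then show ?thesis
      unfolding IH assoc_mult_hist_eval_vec[OF hat_ops hat_carrier vectorize_carrier] .
  qed
  show ?thesis
  proof (induction h rule: meas_count.induct)
    case 1
    show ?case using \<rho> by (simp add: adj_one)
  next
    case (2 \<sigma> h)
    show ?case unfolding hist_eval.simps
      by (rule step[OF _ refl 2]) (use ops in \<open>simp add: square_ops_def\<close>)
  next
    case (3 \<gamma> h)
    show ?case unfolding hist_eval.simps
      by (rule step[OF _ refl 3]) (use ops in \<open>simp add: square_ops_def\<close>)
  qed
qed

lemma block_diag_mult_append_vec:
  assumes X: "X \<in> carrier_mat a a" and Y: "Y \<in> carrier_mat b b"
    and u: "u \<in> carrier_vec a" and w: "w \<in> carrier_vec b"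
  shows "block_diag X Y *\<^sub>v (u @\<^sub>v w) = (X *\<^sub>v u) @\<^sub>v (Y *\<^sub>v w)"
  unfolding block_diag_def using X Y u w
  by (subst four_block_mat_mult_vec[OF X _ _ Y u w]) auto

lemma block_diag_carrier [simp]:
  "X \<in> carrier_mat a a \<Longrightarrow> Y \<in> carrier_mat b b \<Longrightarrow> block_diag X Y \<in> carrier_mat (a + b) (a + b)"
  unfolding block_diag_def by auto

lemma hist_eval_block_diag_mult_append_vec:
  assumes ops1: "square_ops d1 A1 B1" and ops2: "square_ops d2 A2 B2"
    and u: "u \<in> carrier_vec d1" and w: "w \<in> carrier_vec d2"
  shows "hist_eval (\<lambda>\<sigma>. block_diag (A1 \<sigma>) (A2 \<sigma>)) (\<lambda>\<gamma>. block_diag (B1 \<gamma>) (B2 \<gamma>)) (d1 + d2) h *\<^sub>v (u @\<^sub>v w)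
    = (hist_eval A1 B1 d1 h *\<^sub>v u) @\<^sub>v (hist_eval A2 B2 d2 h *\<^sub>v w)"
proof -
  let ?A = "\<lambda>\<sigma>. block_diag (A1 \<sigma>) (A2 \<sigma>)" and ?B = "\<lambda>\<gamma>. block_diag (B1 \<gamma>) (B2 \<gamma>)"
  have ops: "square_ops (d1 + d2) ?A ?B"
    using ops1 ops2 unfolding square_ops_def by auto
  have uw: "u @\<^sub>v w \<in> carrier_vec (d1 + d2)" using u w by simp
  note carriers = mult_mat_vec_carrier[OF hist_eval_carrier[OF ops1] u]
    mult_mat_vec_carrier[OF hist_eval_carrier[OF ops2] w]
  have step: "(block_diag X1 X2 * hist_eval ?A ?B (d1 + d2) h) *\<^sub>v (u @\<^sub>v w)
      = ((X1 * hist_eval A1 B1 d1 h) *\<^sub>v u) @\<^sub>v ((X2 * hist_eval A2 B2 d2 h) *\<^sub>v w)"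
    if X1: "X1 \<in> carrier_mat d1 d1" and X2: "X2 \<in> carrier_mat d2 d2"
      and IH: "hist_eval ?A ?B (d1 + d2) h *\<^sub>v (u @\<^sub>v w)
        = (hist_eval A1 B1 d1 h *\<^sub>v u) @\<^sub>v (hist_eval A2 B2 d2 h *\<^sub>v w)" for X1 X2 h
    unfolding assoc_mult_hist_eval_vec[OF ops block_diag_carrier[OF X1 X2] uw] IH
      assoc_mult_hist_eval_vec[OF ops1 X1 u] assoc_mult_hist_eval_vec[OF ops2 X2 w]
    by (rule block_diag_mult_append_vec[OF X1 X2 carriers])
  show ?thesis
  proof (induction h rule: meas_count.induct)
    case 1
    show ?case using u w by simp
  next
    case (2 \<sigma> h)
    show ?case unfolding hist_eval.simps
      by (rule step[OF _ _ 2]) (use ops1 ops2 in \<open>simp_all add: square_ops_def\<close>)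
  next
    case (3 \<gamma> h)
    show ?case unfolding hist_eval.simps
      by (rule step[OF _ _ 3]) (use ops1 ops2 in \<open>simp_all add: square_ops_def\<close>)
  qed
qed

lemma eta_append_scalar_prod_vectorize:
  assumes X1: "X1 \<in> carrier_mat n1 n1" and X2: "X2 \<in> carrier_mat n2 n2"
  shows "conjugate (eta n1 @\<^sub>v - eta n2) \<bullet> (vectorize n1 X1 @\<^sub>v vectorize n2 X2) = mtrace X1 - mtrace X2"
proof -
  have "conjugate (eta n1 @\<^sub>v - eta n2) = eta n1 @\<^sub>v - eta n2"
    by (rule eq_vecI) (auto simp: eta_def)
  then have "conjugate (eta n1 @\<^sub>v - eta n2) \<bullet> (vectorize n1 X1 @\<^sub>v vectorize n2 X2)
      = eta n1 \<bullet> vectorize n1 X1 + (- eta n2) \<bullet> vectorize n2 X2"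
    by (simp add: scalar_prod_append[of _ "n1 * n1" _ "n2 * n2"])
  moreover have "(- eta n2) \<bullet> vectorize n2 X2 = - (eta n2 \<bullet> vectorize n2 X2)"
    by (rule scalar_prod_uminus_left) (simp add: eta_def vectorize_def)
  ultimately show ?thesis using eta_scalar_prod_vectorize[OF X1] eta_scalar_prod_vectorize[OF X2] by simp
qed

lemma joint_orbit_trace_diff:
  assumes ops1: "square_ops n1 U1 M1" and ops2: "square_ops n2 U2 M2"
    and \<rho>1: "\<rho>1 \<in> carrier_mat n1 n1" and \<rho>2: "\<rho>2 \<in> carrier_mat n2 n2"
  shows "conjugate (eta n1 @\<^sub>v - eta n2) \<bullet>
      (hist_eval (\<lambda>\<sigma>. block_diag (hat n1 (U1 \<sigma>)) (hat n2 (U2 \<sigma>)))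
        (\<lambda>\<gamma>. block_diag (hat n1 (M1 \<gamma>)) (hat n2 (M2 \<gamma>))) (n1 * n1 + n2 * n2) h
       *\<^sub>v (vectorize n1 \<rho>1 @\<^sub>v vectorize n2 \<rho>2))
    = mtrace (hist_eval U1 M1 n1 h * \<rho>1 * adj (hist_eval U1 M1 n1 h))
      - mtrace (hist_eval U2 M2 n2 h * \<rho>2 * adj (hist_eval U2 M2 n2 h))"
proof -
  have hat_ops: "square_ops (d * d) (\<lambda>\<sigma>. hat d (U \<sigma>)) (\<lambda>\<gamma>. hat d (M \<gamma>))" for d U M
    unfolding square_ops_def by simp
  have state1: "hist_eval U1 M1 n1 h * \<rho>1 * adj (hist_eval U1 M1 n1 h) \<in> carrier_mat n1 n1"
    using hist_eval_carrier[OF ops1] \<rho>1 by (metis mult_carrier_mat adj_carrier)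
  have state2: "hist_eval U2 M2 n2 h * \<rho>2 * adj (hist_eval U2 M2 n2 h) \<in> carrier_mat n2 n2"
    using hist_eval_carrier[OF ops2] \<rho>2 by (metis mult_carrier_mat adj_carrier)
  show ?thesis
    unfolding hist_eval_block_diag_mult_append_vec[OF hat_ops hat_ops vectorize_carrier vectorize_carrier]
      vectorize_hist_eval[OF ops1 \<rho>1, symmetric] vectorize_hist_eval[OF ops2 \<rho>2, symmetric]
    by (rule eta_append_scalar_prod_vectorize[OF state1 state2])
qed

lemma vectorize_append_nonzero:
  assumes \<rho>1: "\<rho>1 \<in> carrier_mat n1 n1" and "mtrace \<rho>1 \<noteq> 0"
  shows "vectorize n1 \<rho>1 @\<^sub>v vectorize n2 \<rho>2 \<noteq> 0\<^sub>v (n1 * n1 + n2 * n2)"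
proof
  assume "vectorize n1 \<rho>1 @\<^sub>v vectorize n2 \<rho>2 = 0\<^sub>v (n1 * n1 + n2 * n2)"
  also have "\<dots> = 0\<^sub>v (n1 * n1) @\<^sub>v 0\<^sub>v (n2 * n2)" by auto
  finally have "vectorize n1 \<rho>1 = 0\<^sub>v (n1 * n1)"
    using append_vec_eq[OF vectorize_carrier zero_carrier_vec] by blast
  then show False using eta_scalar_prod_vectorize[OF \<rho>1] assms(2) by simp
qed

theorem proposition1:
  fixes n1 n2 k :: nat
    and U1 U2 :: "'s::finite \<Rightarrow> complex mat"
    and M1 M2 :: "'g::finite \<Rightarrow> complex mat"
    and \<rho>1 \<rho>2 :: "complex mat"
  assumes "qmm n1 U1 M1" and "qmm n2 U2 M2"
    and "density_op n1 \<rho>1" and "density_op n2 \<rho>2"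
    and "k > 0"
  shows "k_equiv k n1 U1 M1 \<rho>1 n2 U2 M2 \<rho>2 \<longleftrightarrow>
    (let n = n1^2 + n2^2; \<eta> = eta n1 @\<^sub>v (- eta n2) in
     \<exists>(F :: nat \<Rightarrow> complex mat) (AS :: nat \<Rightarrow> 's \<Rightarrow> complex mat) (AG :: nat \<Rightarrow> 'g \<Rightarrow> complex mat).
       (\<forall>l \<le> k. F l \<in> carrier_mat n n) \<and>
       (\<forall>l \<le> k. \<forall>\<sigma>. AS l \<sigma> \<in> carrier_mat n n) \<and>
       (\<forall>l < k. \<forall>\<gamma>. AG l \<gamma> \<in> carrier_mat n n) \<and>
       col (F 0) 0 = vectorize n1 \<rho>1 @\<^sub>v vectorize n2 \<rho>2 \<and>
       (\<forall>l \<le> k. mat_of_row (conjugate \<eta>) * F l = 0\<^sub>m 1 n) \<and>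
       (\<forall>\<sigma>. \<forall>l \<le> k. block_diag (hat n1 (U1 \<sigma>)) (hat n2 (U2 \<sigma>)) * F l = F l * AS l \<sigma>) \<and>
       (\<forall>\<gamma>. \<forall>l < k. block_diag (hat n1 (M1 \<gamma>)) (hat n2 (M2 \<gamma>)) * F l = F (Suc l) * AG l \<gamma>))"
proof -
  let ?W = "\<lambda>\<sigma>. block_diag (hat n1 (U1 \<sigma>)) (hat n2 (U2 \<sigma>))"
    and ?N = "\<lambda>\<gamma>. block_diag (hat n1 (M1 \<gamma>)) (hat n2 (M2 \<gamma>))"
    and ?v = "vectorize n1 \<rho>1 @\<^sub>v vectorize n2 \<rho>2" and ?c = "conjugate (eta n1 @\<^sub>v - eta n2)"
  have ops1: "square_ops n1 U1 M1" and ops2: "square_ops n2 U2 M2"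
    using assms(1,2) unfolding qmm_def unitary_op_def square_ops_def by auto
  have \<rho>1: "\<rho>1 \<in> carrier_mat n1 n1" "mtrace \<rho>1 \<noteq> 0" and \<rho>2: "\<rho>2 \<in> carrier_mat n2 n2"
    using assms(3,4) unfolding density_op_def by auto
  have ops: "square_ops (n1 * n1 + n2 * n2) ?W ?N" unfolding square_ops_def by simp
  have c: "?c \<in> carrier_vec (n1 * n1 + n2 * n2)" by simp
  have "k_equiv k n1 U1 M1 \<rho>1 n2 U2 M2 \<rho>2
      \<longleftrightarrow> (\<forall>h. meas_count h \<le> k \<longrightarrow> ?c \<bullet> (hist_eval ?W ?N (n1 * n1 + n2 * n2) h *\<^sub>v ?v) = 0)"
    unfolding k_equiv_iff_hist_traces[OF ops1 ops2] joint_orbit_trace_diff[OF ops1 ops2 \<rho>1(1) \<rho>2]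
    by simp
  also note orbit_annihilated_iff_certificate[OF ops append_carrier_vec[OF vectorize_carrier vectorize_carrier]
      vectorize_append_nonzero[OF \<rho>1] c]
  finally show ?thesis unfolding Let_def power2_eq_square .
qed

end
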